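(* For every $t>0$, the limit $\lim_{n\to\infty}\frac1n\log\mathbb{E}\big(e^{tH_n}\big)$ exists.
   Context: Standing setup (discrete-time Hawkes process, DTHP). Let $(a_i)_{i=0}^\infty$ be a sequence of strictly positive real numbers with $\sum_{i=0}^\infty a_i<1$ and $\sum_{i=1}^\infty i\,a_i<\infty$. The arrival process $\{\xi_n\}_{n\ge1}$ is a sequence of $\{0,1\}$-valued random variables on a probability space $(\Omega,\mathcal F,\mathbb P)$ with $\mathbb{P}(\xi_1=1)=a_0$, $\mathbb P(\xi_1=0)=1-a_0$, and for $n\ge2$, $$\mathbb{P}(\xi_n=1\mid \xi_1,\dots,\xi_{n-1})=a_0+\sum_{i=1}^{n-1}a_{n-i}\xi_i,\qquad \mathbb{P}(\xi_n=0\mid \xi_1,\dots,\xi_{n-1})=1-\Big(a_0+\sum_{i=1}^{n-1}a_{n-i}\xi_i\Big).$$ The DTHP is $H_n=\sum_{i=1}^n\xi_i$, and $\mathcal F_n=\sigma(\xi_1,\dots,\xi_n)$. *)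

theory Defs
  imports "HOL-Probability.Probability"
begin

definition dthp_intensity :: "(nat \<Rightarrow> real) \<Rightarrow> (nat \<Rightarrow> bool) \<Rightarrow> nat \<Rightarrow> real" where
  "dthp_intensity a x n = a 0 + (\<Sum>i = 1..<n. a (n - i) * of_bool (x i))"

text \<open>xi is a DTHP with kernel a on the probability space M: xi 1, xi 2, ... are
  {0,1}-valued (here bool-valued) random variables whose conditional law given the past is
  prescribed; the conditioning on the discrete past is written out elementarily:
  P(xi_1..xi_n = x_1..x_n) = P(xi_1..xi_{n-1} = x_1..x_{n-1}) * P(xi_n = x_n | past = x).
  The value xi 0 is irrelevant.\<close>
definition is_DTHP :: "'w measure \<Rightarrow> (nat \<Rightarrow> real) \<Rightarrow> (nat \<Rightarrow> 'w \<Rightarrow> bool) \<Rightarrow> bool" where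
  "is_DTHP M a \<xi> \<longleftrightarrow>
     prob_space M \<and>
     (\<forall>i. \<xi> i \<in> M \<rightarrow>\<^sub>M count_space UNIV) \<and>
     (\<forall>n\<ge>1. \<forall>x :: nat \<Rightarrow> bool.
        measure M {\<omega> \<in> space M. \<forall>i\<in>{1..n}. \<xi> i \<omega> = x i} =
        measure M {\<omega> \<in> space M. \<forall>i\<in>{1..<n}. \<xi> i \<omega> = x i} *
          (if x n then dthp_intensity a x n else 1 - dthp_intensity a x n))"

definition dthp_H :: "(nat \<Rightarrow> 'w \<Rightarrow> bool) \<Rightarrow> nat \<Rightarrow> 'w \<Rightarrow> nat" where
  "dthp_H \<xi> n \<omega> = (\<Sum>i = 1..n. of_bool (\<xi> i \<omega>))"

end

theory Submission
  imports Defs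
begin

text \<open>
  Let \<open>hawkes_mgf a t c m\<close> be the moment generating function at \<open>t\<close> of the number of
  arrivals in \<open>m\<close> steps of a DTHP started afresh but carrying the extra excitation \<open>c\<close>
  inherited from a past history. Conditioning on the first \<open>n\<close> steps shows that
  \<open>E[exp (t (H (n+m) - H n)) | history x] = hawkes_mgf a t c m\<close>, where \<open>c\<close> is the
  excitation left by \<open>x\<close>, while \<open>E exp (t H m) = hawkes_mgf a t 0 m\<close>. For \<open>t \<ge> 0\<close> the
  function \<open>hawkes_mgf\<close> is monotone in the excitation, hence
  \<open>E exp (t H (n+m)) \<ge> E exp (t H n) * E exp (t H m)\<close>: the sequence \<open>ln E exp (t H n)\<close> is
  superadditive and bounded by \<open>t n\<close>, and Fekete's lemma gives the limit.
\<close>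

section \<open>Fekete's lemma\<close>

lemma superadditive_mult_add:
  fixes f :: "nat \<Rightarrow> real"
  assumes "\<And>m n. f m + f n \<le> f (m + n)"
  shows "real q * f k + f r \<le> f (q * k + r)"
proof (induction q)
  case 0 then show ?case by simp
next
  case (Suc q)
  have "real (Suc q) * f k + f r = f k + (real q * f k + f r)" by (simp add: algebra_simps)
  also have "\<dots> \<le> f k + f (q * k + r)" using Suc by simp
  also have "\<dots> \<le> f (k + (q * k + r))" by (rule assms)
  finally show ?case by (simp add: add.assoc)
qed

lemma superadditive_ratio_lower_bound:
  fixes f :: "nat \<Rightarrow> real"
  assumes sup: "\<And>m n. f m + f n \<le> f (m + n)" and k: "k \<ge> 1" and n: "n \<ge> 1"
  shows "f k / k - (\<bar>f k\<bar> + \<bar>Min (f ` {..<k})\<bar>) / n \<le> f n / n"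
proof -
  \<comment> \<open>\<open>f n \<ge> q f k + f r\<close> for \<open>n = q k + r\<close>, and \<open>r < k\<close> is controlled by the minimum.\<close>
  define q r where "q = n div k" and "r = n mod k"
  have "r < k" using k by (simp add: r_def)
  have "n = q * k + r" by (simp add: q_def r_def)
  then have n_eq: "real n = real q * k + r" by (metis of_nat_add of_nat_mult)
  have "Min (f ` {..<k}) \<le> f r" using \<open>r < k\<close> by (intro Min_le) auto
  moreover have "real q * f k + f r \<le> f n"
    using superadditive_mult_add[of f, OF sup, of q k r] by (simp add: q_def r_def)
  moreover have "real r / k * f k \<le> \<bar>f k\<bar>"
  proof -
    have "real r / k * f k \<le> real r / k * \<bar>f k\<bar>" by (intro mult_left_mono) auto
    also have "\<dots> \<le> \<bar>f k\<bar>" using \<open>r < k\<close> by (intro mult_left_le_one_le) auto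
    finally show ?thesis .
  qed
  moreover have "real n * (f k / k) = real q * f k + real r / k * f k"
    using k by (simp add: n_eq field_simps)
  ultimately have "real n * (f k / k) - (\<bar>f k\<bar> + \<bar>Min (f ` {..<k})\<bar>) \<le> f n"
    by linarith
  from divide_right_mono[OF this, of n] show ?thesis
    using n by (simp add: diff_divide_distrib)
qed

lemma fekete_superadditive:
  fixes f :: "nat \<Rightarrow> real"
  assumes sup: "\<And>m n. f m + f n \<le> f (m + n)"
    and bdd: "bdd_above ((\<lambda>n. f n / n) ` {1..})"
  shows "(\<lambda>n. f n / n) \<longlonglongrightarrow> (SUP n\<in>{1..}. f n / n)"
proof (rule order_tendstoI)
  fix y assume "y < (SUP n\<in>{1..}. f n / n)"
  then obtain k where k: "k \<ge> 1" "y < f k / k" using bdd by (subst (asm) less_cSUP_iff) auto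
  define B where "B = \<bar>f k\<bar> + \<bar>Min (f ` {..<k})\<bar>"
  have "(\<lambda>n. f k / k - B / n) \<longlonglongrightarrow> f k / k - 0"
    by (intro tendsto_diff tendsto_const lim_const_over_n)
  then have "eventually (\<lambda>n. y < f k / k - B / n) sequentially"
    using order_tendstoD(1) k(2) by simp
  moreover have "eventually (\<lambda>n. n \<ge> 1) sequentially" by (rule eventually_ge_at_top)
  ultimately show "eventually (\<lambda>n. y < f n / n) sequentially"
  proof eventually_elim
    case (elim n)
    then show ?case using superadditive_ratio_lower_bound[of f, OF sup k(1), of n] by (simp add: B_def)
  qed
next
  fix y assume y: "(SUP n\<in>{1..}. f n / n) < y"
  have "f n / n \<le> (SUP n\<in>{1..}. f n / n)" if "n \<ge> 1" for n
    using bdd by (rule cSUP_upper[rotated]) (use that in simp)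
  then have "f n / n < y" if "n \<ge> 1" for n
    using that y by (meson le_less_trans)
  then show "eventually (\<lambda>n. f n / n < y) sequentially"
    by (rule eventually_mono[OF eventually_ge_at_top[of 1]])
qed

section \<open>The moment generating function with inherited excitation\<close>

definition clamp01 :: "real \<Rightarrow> real" where
  "clamp01 x = max 0 (min 1 x)"

lemma clamp01_bounds: "0 \<le> clamp01 x" "clamp01 x \<le> 1"
  by (simp_all add: clamp01_def)

lemma clamp01_mono: "x \<le> y \<Longrightarrow> clamp01 x \<le> clamp01 y"
  by (simp add: clamp01_def)

text \<open>\<open>excitation a n x k\<close> is the contribution of the arrivals \<open>x 1, \<dots>, x n\<close> to the
  intensity at time \<open>n + k + 1\<close>.\<close>

definition excitation :: "(nat \<Rightarrow> real) \<Rightarrow> nat \<Rightarrow> (nat \<Rightarrow> bool) \<Rightarrow> nat \<Rightarrow> real" where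
  "excitation a n x k = (\<Sum>i = 1..n. a (n + k + 1 - i) * of_bool (x i))"

lemma excitation_0: "excitation a 0 x = (\<lambda>_. 0)"
  by (simp add: excitation_def fun_eq_iff)

lemma excitation_fun_upd_Suc_eq: "excitation a n (x(Suc n := b)) = excitation a n x"
  by (simp add: excitation_def fun_eq_iff)

lemma excitation_Suc_fun_upd:
  "excitation a (Suc n) (x(Suc n := b)) = (\<lambda>k. excitation a n x (Suc k) + (if b then a (Suc k) else 0))"
  by (simp add: excitation_def fun_eq_iff)

lemma dthp_intensity_Suc_eq: "dthp_intensity a x (Suc n) = a 0 + excitation a n x 0"
  by (simp add: dthp_intensity_def excitation_def atLeastLessThanSuc_atLeastAtMost)

text \<open>First-step analysis: the next step has intensity \<open>a 0 + c 0\<close>, and an arrival adds the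
  shifted kernel to the excitation. Clamping the intensity to \<open>[0, 1]\<close> makes the recursion
  monotone in \<open>c\<close> for arbitrary \<open>c\<close>; on histories of positive probability the clamp is
  inactive (\<open>prob_cylinder_mult_clamp01\<close>).\<close>

fun hawkes_mgf :: "(nat \<Rightarrow> real) \<Rightarrow> real \<Rightarrow> (nat \<Rightarrow> real) \<Rightarrow> nat \<Rightarrow> real" where
  "hawkes_mgf a t c 0 = 1"
| "hawkes_mgf a t c (Suc m) =
     clamp01 (a 0 + c 0) * (exp t * hawkes_mgf a t (\<lambda>k. c (Suc k) + a (Suc k)) m)
   + (1 - clamp01 (a 0 + c 0)) * hawkes_mgf a t (\<lambda>k. c (Suc k)) m"

lemma hawkes_mgf_ge_1:
  assumes "0 \<le> t"
  shows "1 \<le> hawkes_mgf a t c m"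
proof (induction m arbitrary: c)
  case 0 then show ?case by simp
next
  case (Suc m)
  define l where "l = clamp01 (a 0 + c 0)"
  have "1 \<le> exp t" using assms by simp
  from mult_mono[OF this Suc.IH] have "1 \<le> exp t * hawkes_mgf a t (\<lambda>k. c (Suc k) + a (Suc k)) m"
    by simp
  then have "l * 1 + (1 - l) * 1 \<le> hawkes_mgf a t c (Suc m)"
    unfolding hawkes_mgf.simps l_def[symmetric] using Suc.IH clamp01_bounds[of "a 0 + c 0"]
    by (intro add_mono mult_left_mono) (auto simp: l_def)
  then show ?case by simp
qed

lemma hawkes_mgf_le_exp:
  assumes "0 \<le> t"
  shows "hawkes_mgf a t c m \<le> exp (t * m)"
proof (induction m arbitrary: c)
  case 0 then show ?case by simp
next
  case (Suc m)
  have "exp t * hawkes_mgf a t (\<lambda>k. c (Suc k) + a (Suc k)) m \<le> exp t * exp (t * m)"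
    using Suc.IH by simp
  also have "\<dots> = exp (t * Suc m)" by (simp add: algebra_simps flip: exp_add)
  finally have excited: "exp t * hawkes_mgf a t (\<lambda>k. c (Suc k) + a (Suc k)) m \<le> exp (t * Suc m)" .
  have "exp (t * m) \<le> exp (t * Suc m)" using assms by (simp add: mult_left_mono)
  then have "hawkes_mgf a t (\<lambda>k. c (Suc k)) m \<le> exp (t * Suc m)"
    using Suc.IH order_trans by blast
  then show ?case
    unfolding hawkes_mgf.simps using excited clamp01_bounds by (intro convex_bound_le) auto
qed

lemma hawkes_mgf_mono:
  assumes t: "0 \<le> t" and a: "\<And>k. 0 \<le> a k" and le: "\<And>k. c k \<le> d k"
  shows "hawkes_mgf a t c m \<le> hawkes_mgf a t d m"
  using le
proof (induction m arbitrary: c d)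
  case 0 then show ?case by simp
next
  case (Suc m)
  define lc ld where "lc = clamp01 (a 0 + c 0)" and "ld = clamp01 (a 0 + d 0)"
  define c1 c2 where "c1 = hawkes_mgf a t (\<lambda>k. c (Suc k) + a (Suc k)) m"
    and "c2 = hawkes_mgf a t (\<lambda>k. c (Suc k)) m"
  define d1 d2 where "d1 = hawkes_mgf a t (\<lambda>k. d (Suc k) + a (Suc k)) m"
    and "d2 = hawkes_mgf a t (\<lambda>k. d (Suc k)) m"
  have l: "0 \<le> lc" "lc \<le> ld"
    unfolding lc_def ld_def using Suc.prems[of 0] by (auto intro: clamp01_bounds clamp01_mono)
  have "c1 \<le> d1" "c2 \<le> d2" "d2 \<le> d1"
    unfolding c1_def d1_def c2_def d2_def using Suc.prems a by (auto intro!: Suc.IH add_mono)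
  moreover have "d1 \<le> exp t * d1"
  proof -
    have "1 \<le> d1" unfolding d1_def by (rule hawkes_mgf_ge_1[OF t])
    then show ?thesis using t by (simp add: mult_le_cancel_right1)
  qed
  \<comment> \<open>An arrival only increases the mgf, so raising the arrival probability from \<open>lc\<close> to
    \<open>ld\<close> cannot decrease the convex combination.\<close>
  ultimately have "d2 \<le> exp t * d1" by linarith
  have "hawkes_mgf a t c (Suc m) = lc * (exp t * c1) + (1 - lc) * c2"
    by (simp add: lc_def c1_def c2_def)
  also have "\<dots> \<le> lc * (exp t * d1) + (1 - lc) * d2"
    using l \<open>c1 \<le> d1\<close> \<open>c2 \<le> d2\<close> clamp01_bounds
    by (intro add_mono mult_left_mono) (auto simp: lc_def)
  also have "\<dots> = d2 + lc * (exp t * d1 - d2)" by (simp add: algebra_simps)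
  also have "\<dots> \<le> d2 + ld * (exp t * d1 - d2)"
    using l \<open>d2 \<le> exp t * d1\<close> by (intro add_left_mono mult_right_mono) auto
  also have "\<dots> = hawkes_mgf a t d (Suc m)" by (simp add: ld_def d1_def d2_def algebra_simps)
  finally show ?case .
qed

lemma hawkes_mgf_supermultiplicative:
  assumes t: "0 \<le> t" and a: "\<And>k. 0 \<le> a k" and c: "\<And>k. 0 \<le> c k"
  shows "hawkes_mgf a t c n * hawkes_mgf a t (\<lambda>_. 0) m \<le> hawkes_mgf a t c (n + m)"
  using c
proof (induction n arbitrary: c)
  case 0 then show ?case using hawkes_mgf_mono[OF t a] by simp
next
  case (Suc n)
  define l where "l = clamp01 (a 0 + c 0)"
  have l: "0 \<le> l" "l \<le> 1" unfolding l_def by (rule clamp01_bounds)+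
  have "hawkes_mgf a t c (Suc n) * hawkes_mgf a t (\<lambda>_. 0) m
      = l * (exp t * (hawkes_mgf a t (\<lambda>k. c (Suc k) + a (Suc k)) n * hawkes_mgf a t (\<lambda>_. 0) m))
        + (1 - l) * (hawkes_mgf a t (\<lambda>k. c (Suc k)) n * hawkes_mgf a t (\<lambda>_. 0) m)"
    by (simp add: l_def algebra_simps)
  also have "\<dots> \<le> l * (exp t * hawkes_mgf a t (\<lambda>k. c (Suc k) + a (Suc k)) (n + m))
        + (1 - l) * hawkes_mgf a t (\<lambda>k. c (Suc k)) (n + m)"
    using l Suc.prems a by (intro add_mono mult_left_mono Suc.IH add_nonneg_nonneg) auto
  also have "\<dots> = hawkes_mgf a t c (Suc n + m)" by (simp add: l_def)
  finally show ?case .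
qed

lemma convergent_ln_hawkes_mgf:
  assumes t: "0 \<le> t" and a: "\<And>k. 0 \<le> a k"
  shows "convergent (\<lambda>n. ln (hawkes_mgf a t (\<lambda>_. 0) n) / n)"
proof -
  define f where "f n = ln (hawkes_mgf a t (\<lambda>_. 0) n)" for n
  have pos: "0 < hawkes_mgf a t c n" for c n
    using hawkes_mgf_ge_1[OF t] by (rule less_le_trans[OF zero_less_one])
  have "f m + f n \<le> f (m + n)" for m n
    unfolding f_def ln_mult_pos[OF pos pos, symmetric]
    using hawkes_mgf_supermultiplicative[OF t a] pos by (subst ln_le_cancel_iff) auto
  moreover have "bdd_above ((\<lambda>n. f n / n) ` {1..})"
  proof (rule bdd_aboveI2)
    fix n :: nat assume "n \<in> {1..}"
    have "f n \<le> ln (exp (t * n))"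
      unfolding f_def using hawkes_mgf_le_exp[OF t] pos by (subst ln_le_cancel_iff) auto
    then have "f n \<le> t * n" by simp
    then show "f n / n \<le> t" using \<open>n \<in> {1..}\<close> by (simp add: divide_le_eq)
  qed
  ultimately show ?thesis
    unfolding f_def[symmetric] by (rule convergentI[OF fekete_superadditive])
qed

section \<open>Conditioning on the history of a DTHP\<close>

locale dthp =
  fixes M :: "'w measure" and a :: "nat \<Rightarrow> real" and \<xi> :: "nat \<Rightarrow> 'w \<Rightarrow> bool"
  assumes is_dthp: "is_DTHP M a \<xi>"
begin

sublocale prob_space M
  using is_dthp unfolding is_DTHP_def by blast

lemma measurable_arrival [measurable]: "\<xi> i \<in> M \<rightarrow>\<^sub>M count_space UNIV"
  using is_dthp unfolding is_DTHP_def by blast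

definition cylinder :: "nat \<Rightarrow> (nat \<Rightarrow> bool) \<Rightarrow> 'w set" where
  "cylinder n x = {\<omega> \<in> space M. \<forall>i\<in>{1..n}. \<xi> i \<omega> = x i}"

lemma sets_cylinder [measurable]: "cylinder n x \<in> sets M"
  unfolding cylinder_def by measurable

lemma cylinder_0: "cylinder 0 x = space M"
  by (simp add: cylinder_def)

lemma cylinder_fun_upd_Suc: "cylinder n (x(Suc n := b)) = cylinder n x"
  by (simp add: cylinder_def)

lemma cylinder_Suc: "cylinder (Suc n) x = {\<omega> \<in> cylinder n x. \<xi> (Suc n) \<omega> = x (Suc n)}"
proof -
  have "{1..Suc n} = insert (Suc n) {1..n}" by auto
  then show ?thesis by (auto simp: cylinder_def)
qed

lemma prob_cylinder_Suc:
  "prob (cylinder (Suc n) (x(Suc n := b))) =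
     prob (cylinder n x) * (if b then a 0 + excitation a n x 0 else 1 - (a 0 + excitation a n x 0))"
proof -
  have "prob (cylinder (Suc n) y) = prob (cylinder n y) *
      (if y (Suc n) then dthp_intensity a y (Suc n) else 1 - dthp_intensity a y (Suc n))" for y
    using is_dthp unfolding is_DTHP_def cylinder_def by (simp add: atLeastLessThanSuc_atLeastAtMost)
  then show ?thesis
    by (simp add: dthp_intensity_Suc_eq excitation_fun_upd_Suc_eq cylinder_fun_upd_Suc)
qed

lemma prob_cylinder_mult_clamp01:
  "prob (cylinder n x) * clamp01 (a 0 + excitation a n x 0) = prob (cylinder n x) * (a 0 + excitation a n x 0)"
proof -
  define l where "l = a 0 + excitation a n x 0"
  have "0 \<le> prob (cylinder n x) * l" "0 \<le> prob (cylinder n x) * (1 - l)"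
    using prob_cylinder_Suc[of n x True, symmetric] prob_cylinder_Suc[of n x False, symmetric]
    by (simp_all add: l_def)
  then have "prob (cylinder n x) = 0 \<or> 0 \<le> l \<and> l \<le> 1"
    using measure_nonneg[of M "cylinder n x"] by (auto simp: zero_le_mult_iff)
  then show ?thesis by (auto simp: clamp01_def l_def[symmetric])
qed

definition exp_increment :: "real \<Rightarrow> nat \<Rightarrow> nat \<Rightarrow> 'w \<Rightarrow> real" where
  "exp_increment t n m \<omega> = (\<Prod>i\<in>{n<..n + m}. exp (t * of_bool (\<xi> i \<omega>)))"

lemma exp_increment_0: "exp_increment t 0 n \<omega> = exp (t * real (dthp_H \<xi> n \<omega>))"
proof -
  have "exp (t * real (dthp_H \<xi> n \<omega>)) = exp (\<Sum>i\<in>{1..n}. t * of_bool (\<xi> i \<omega>))"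
    unfolding dthp_H_def of_nat_sum of_nat_of_bool sum_distrib_left ..
  also have "\<dots> = (\<Prod>i\<in>{1..n}. exp (t * of_bool (\<xi> i \<omega>)))" by (rule exp_sum) simp
  also have "{1..n} = {0<..0 + n}" by auto
  finally show ?thesis unfolding exp_increment_def ..
qed

lemma exp_increment_Suc:
  "exp_increment t n (Suc m) \<omega> = exp (t * of_bool (\<xi> (Suc n) \<omega>)) * exp_increment t (Suc n) m \<omega>"
proof -
  have "{n<..n + Suc m} = insert (Suc n) {Suc n<..Suc n + m}" by auto
  then show ?thesis by (simp add: exp_increment_def)
qed

lemma integrable_indicator_exp_increment:
  assumes [measurable]: "A \<in> sets M"
  shows "integrable M (\<lambda>\<omega>. indicator A \<omega> * exp_increment t n m \<omega>)"
proof (rule integrable_const_bound[where B = "exp \<bar>t\<bar> ^ m"])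
  have "exp_increment t n m \<omega> \<le> (\<Prod>i\<in>{n<..n + m}. exp \<bar>t\<bar>)" for \<omega>
    unfolding exp_increment_def by (intro prod_mono) auto
  moreover have "0 \<le> exp_increment t n m \<omega>" for \<omega>
    unfolding exp_increment_def by (intro prod_nonneg) auto
  ultimately show "AE \<omega> in M. norm (indicator A \<omega> * exp_increment t n m \<omega>) \<le> exp \<bar>t\<bar> ^ m"
    by (auto simp: indicator_def)
qed (unfold exp_increment_def, measurable)

lemma indicator_cylinder_exp_increment_Suc:
  "indicator (cylinder n x) \<omega> * exp_increment t n (Suc m) \<omega> =
     exp t * (indicator (cylinder (Suc n) (x(Suc n := True))) \<omega> * exp_increment t (Suc n) m \<omega>)
   + indicator (cylinder (Suc n) (x(Suc n := False))) \<omega> * exp_increment t (Suc n) m \<omega>"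
  unfolding exp_increment_Suc cylinder_Suc cylinder_fun_upd_Suc by (simp add: indicator_def)

lemma integral_cylinder_exp_increment:
  "(\<integral>\<omega>. indicator (cylinder n x) \<omega> * exp_increment t n m \<omega> \<partial>M) =
     prob (cylinder n x) * hawkes_mgf a t (excitation a n x) m"
proof (induction m arbitrary: n x)
  case 0
  then show ?case by (simp add: exp_increment_def)
next
  case (Suc m)
  define p l where "p = prob (cylinder n x)" and "l = a 0 + excitation a n x 0"
  define W1 W2 where "W1 = hawkes_mgf a t (\<lambda>k. excitation a n x (Suc k) + a (Suc k)) m"
    and "W2 = hawkes_mgf a t (\<lambda>k. excitation a n x (Suc k)) m"
  have "(\<integral>\<omega>. indicator (cylinder n x) \<omega> * exp_increment t n (Suc m) \<omega> \<partial>M) =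
      exp t * (\<integral>\<omega>. indicator (cylinder (Suc n) (x(Suc n := True))) \<omega> * exp_increment t (Suc n) m \<omega> \<partial>M)
    + (\<integral>\<omega>. indicator (cylinder (Suc n) (x(Suc n := False))) \<omega> * exp_increment t (Suc n) m \<omega> \<partial>M)"
    unfolding indicator_cylinder_exp_increment_Suc
    by (simp add: integrable_indicator_exp_increment)
  also have "\<dots> = exp t * (p * l * W1) + p * (1 - l) * W2"
    unfolding Suc.IH prob_cylinder_Suc excitation_Suc_fun_upd by (simp add: p_def l_def W1_def W2_def)
  also have "\<dots> = p * clamp01 l * (exp t * W1) + (p - p * clamp01 l) * W2"
    using prob_cylinder_mult_clamp01[of n x] by (simp add: p_def l_def algebra_simps)
  also have "\<dots> = p * hawkes_mgf a t (excitation a n x) (Suc m)"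
    by (simp add: l_def W1_def W2_def algebra_simps)
  finally show ?case by (simp add: p_def)
qed

lemma integral_exp_dthp_H: "(\<integral>\<omega>. exp (t * real (dthp_H \<xi> n \<omega>)) \<partial>M) = hawkes_mgf a t (\<lambda>_. 0) n"
proof -
  have "(\<integral>\<omega>. exp (t * real (dthp_H \<xi> n \<omega>)) \<partial>M) =
      (\<integral>\<omega>. indicator (cylinder 0 (\<lambda>_. False)) \<omega> * exp_increment t 0 n \<omega> \<partial>M)"
    by (rule Bochner_Integration.integral_cong) (simp_all add: cylinder_0 exp_increment_0)
  also have "\<dots> = hawkes_mgf a t (\<lambda>_. 0) n"
    unfolding integral_cylinder_exp_increment by (simp add: cylinder_0 excitation_0 prob_space)
  finally show ?thesis .
qed

end

theorem lemma4p7: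
  fixes a :: "nat \<Rightarrow> real" and M :: "'w measure" and \<xi> :: "nat \<Rightarrow> 'w \<Rightarrow> bool" and t :: real
  assumes a_pos: "\<And>i. a i > 0"
    and a_summable: "summable a"
    and a_sum_lt1: "(\<Sum>i. a i) < 1"
    and a_mean: "summable (\<lambda>i. real i * a i)"
    and dthp: "is_DTHP M a \<xi>"
    and t_pos: "t > 0"
  shows "convergent (\<lambda>n. ln (\<integral>\<omega>. exp (t * real (dthp_H \<xi> n \<omega>)) \<partial>M) / real n)"
proof -
  interpret dthp M a \<xi> by (rule dthp.intro[OF dthp])
  have "0 \<le> t" "\<And>k. 0 \<le> a k" using t_pos a_pos by (simp_all add: less_imp_le)
  then show ?thesis
    unfolding integral_exp_dthp_H by (rule convergent_ln_hawkes_mgf)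
qed

end
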